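(* Let $C$ be a complex geodesic with polar point $p$, let $\mathrm G$ be a geodesic not included in $C$, and let $g,g'$ be distinct negative points of $\mathrm G$. If $\mathrm G\cap C\cap \mathrm BV\neq\varnothing$, then $\dfrac{\langle g,p\rangle\langle p,g'\rangle}{\langle g,g'\rangle}\in\mathbb R$. Suppose now that $\dfrac{\langle g,p\rangle\langle p,g'\rangle}{\langle g,g'\rangle}\notin\mathbb R$. Then there exists a unique point of $\mathrm G$ closest to $C$, and the condition $\mathrm{ta}(\mathrm G,C)=\mathrm{ta}(g,C)$ is equivalent to $\mathrm{Re}\dfrac{\langle p,g'\rangle\langle g,g\rangle}{\langle g,g'\rangle\langle p,g\rangle}=1$.
   Context: $V$ is a $3$-dimensional complex vector space with a hermitian form $\langle-,-\rangle$ of signature $++-$; $\mathrm BV=\{x\in\mathbb{CP}V:\langle x,x\rangle<0\}$ is the complex hyperbolic plane, $\mathrm SV$ the set of isotropic points, $\overline{\mathrm B}V=\mathrm BV\cup\mathrm SV$. Points are identified with representative vectors where expressions are projectively invariant. A complex geodesic is $C=\mathbb{CP}p^\perp\cap\overline{\mathrm B}V$ for a positive point $p$ (its polar point). A geodesic is a complete real geodesic in $\overline{\mathrm B}V$ (including its two ideal endpoints). For nonisotropic $x,y$, $\mathrm{ta}(x,y)=\frac{\langle x,y\rangle\langle y,x\rangle}{\langle x,x\rangle\langle y,y\rangle}$; for a negative point $g$, $\mathrm{ta}(g,C):=1-\mathrm{ta}(g,p)$ (equal to $\cosh^2$ of the distance from $g$ to $C$), and $\mathrm{ta}(\mathrm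 G,C):=\inf_{g\in\mathrm G\cap\mathrm BV}\mathrm{ta}(g,C)$. *)

theory Defs
  imports "HOL-Analysis.Analysis"
begin

definition herm :: "complex^3 \<Rightarrow> complex^3 \<Rightarrow> complex" where
  "herm x y = x$1 * cnj (y$1) + x$2 * cnj (y$2) - x$3 * cnj (y$3)"

text \<open>Points of CP(V) are represented by nonzero vectors; two vectors represent
the same point iff they are proportional.\<close>

definition same_point :: "complex^3 \<Rightarrow> complex^3 \<Rightarrow> bool" where
  "same_point x y \<longleftrightarrow> (\<exists>c::complex. c \<noteq> 0 \<and> y = c *s x)"

definition negative :: "complex^3 \<Rightarrow> bool" where
  "negative x \<longleftrightarrow> x \<noteq> 0 \<and> Re (herm x x) < 0"

definition positive :: "complex^3 \<Rightarrow> bool" where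
  "positive x \<longleftrightarrow> x \<noteq> 0 \<and> Re (herm x x) > 0"

definition in_cball :: "complex^3 \<Rightarrow> bool" where
  "in_cball x \<longleftrightarrow> x \<noteq> 0 \<and> Re (herm x x) \<le> 0"

definition complex_geodesic :: "complex^3 \<Rightarrow> (complex^3) set" where
  "complex_geodesic p = {x. in_cball x \<and> herm x p = 0}"

text \<open>Geodesic: projectivisation of a totally real 2-dimensional real subspace
R v + R w (with <v,w> real, v negative, v,w complex-independent), intersected
with the closed ball.\<close>
definition geodesic_through :: "complex^3 \<Rightarrow> complex^3 \<Rightarrow> (complex^3) set" where
  "geodesic_through v w = {x. in_cball x \<and>
      (\<exists>(a::real) (b::real) (c::complex). c \<noteq> 0 \<and>
         x = c *s (of_real a *s v + of_real b *s w))}"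

definition is_geodesic :: "(complex^3) set \<Rightarrow> bool" where
  "is_geodesic G \<longleftrightarrow> (\<exists>v w. negative v \<and> herm v w \<in> \<real> \<and>
      \<not> (\<exists>c::complex. w = c *s v) \<and> G = geodesic_through v w)"

definition ta :: "complex^3 \<Rightarrow> complex^3 \<Rightarrow> complex" where
  "ta x y = herm x y * herm y x / (herm x x * herm y y)"

definition ta_pt_cgeod :: "complex^3 \<Rightarrow> complex^3 \<Rightarrow> real" where
  "ta_pt_cgeod g p = 1 - Re (ta g p)"

definition ta_geod_cgeod :: "(complex^3) set \<Rightarrow> complex^3 \<Rightarrow> real" where
  "ta_geod_cgeod G p = (INF g\<in>{g\<in>G. negative g}. ta_pt_cgeod g p)"

end

theory Submission
  imports Defs "HOL-Library.Quadratic_Discriminant"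
begin

text \<open>Write the points of the geodesic as \<open>c (a v + b w)\<close> with \<open>a, b\<close> real. On the real plane
\<open>\<real>v + \<real>w\<close> the hermitian form is minus a real binary quadratic form \<open>N\<close> of signature \<open>(1, 1)\<close>,
and \<open>|\<langle>x, p\<rangle>|\<^sup>2\<close> is a positive semidefinite binary form \<open>Q\<close>, so that
\<open>ta(x, C) = 1 + Q(x) / (N(x) \<langle>p, p\<rangle>)\<close>. The imaginary part of the ratio in the statement is
proportional to a number \<open>skew\<close> with \<open>skew\<^sup>2 = det Q\<close>; a negative point of \<open>G\<close> in \<open>C\<close> is an
isotropic vector of \<open>Q\<close> and forces \<open>skew = 0\<close>. If the ratio is not real, \<open>Q\<close> is definite and
minimising \<open>Q / N\<close> on \<open>N > 0\<close> is a generalised eigenvalue problem: the positive root \<open>\<lambda>\<close> of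
\<open>det (Q - t N)\<close> is the minimum, attained exactly on the isotropic line of the singular form
\<open>Q - \<lambda> N\<close>, and \<open>z\<close> lies on that line iff \<open>Q(z) N(z, h) = N(z) Q(z, h)\<close> for any \<open>h\<close> independent
of \<open>z\<close>, which is the real-part condition.\<close>

text \<open>A triple \<open>(m11, m12, m22)\<close> stands for the symmetric matrix \<open>[[m11, m12], [m12, m22]]\<close>.\<close>

definition bform :: "real \<times> real \<times> real \<Rightarrow> real \<times> real \<Rightarrow> real \<times> real \<Rightarrow> real" where
  "bform m x y = (case m of (m11, m12, m22) \<Rightarrow>
     m11 * fst x * fst y + m12 * (fst x * snd y + snd x * fst y) + m22 * snd x * snd y)"

abbreviation qform :: "real \<times> real \<times> real \<Rightarrow> real \<times> real \<Rightarrow> real" where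
  "qform m x \<equiv> bform m x x"

definition fdet :: "real \<times> real \<times> real \<Rightarrow> real" where
  "fdet m = (case m of (m11, m12, m22) \<Rightarrow> m11 * m22 - m12\<^sup>2)"

definition cross2 :: "real \<times> real \<Rightarrow> real \<times> real \<Rightarrow> real" where
  "cross2 x y = fst x * snd y - snd x * fst y"

lemma bform_zero_left [simp]: "bform m 0 y = 0"
  by (cases m) (simp add: bform_def)

lemma bform_diff_scaleR: "bform (m - t *\<^sub>R n) x y = bform m x y - t * bform n x y"
  by (cases m; cases n) (simp add: bform_def algebra_simps)

lemma qform_mult_qform:
  "qform m x * qform m y = (bform m x y)\<^sup>2 + fdet m * (cross2 x y)\<^sup>2"
  by (cases m) (simp add: bform_def fdet_def cross2_def power2_eq_square algebra_simps)

lemma fdet_diff_scaleR_quadratic: "\<exists>b. \<forall>t. fdet (m - t *\<^sub>R n) = fdet n * t\<^sup>2 + b * t + fdet m"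
proof (cases m; cases n)
  fix m11 m12 m22 n11 n12 n22
  assume "m = (m11, m12, m22)" "n = (n11, n12, n22)"
  then show ?thesis
    by (intro exI[of _ "2 * m12 * n12 - m11 * n22 - m22 * n11"])
      (simp add: fdet_def power2_eq_square algebra_simps)
qed

lemma cross2_eq_0_imp_scaleR:
  assumes "cross2 x y = 0" "x \<noteq> 0"
  shows "\<exists>s. y = s *\<^sub>R x"
proof (cases "fst x = 0")
  case True
  with assms show ?thesis
    by (intro exI[of _ "snd y / snd x"]) (auto simp: cross2_def prod_eq_iff)
next
  case False
  with assms show ?thesis
    by (intro exI[of _ "fst y / fst x"]) (auto simp: cross2_def prod_eq_iff field_simps)
qed

lemma fdet_nonpos_isotropic:
  assumes "fdet m \<le> 0"
  obtains k where "k \<noteq> 0" "qform m k = 0"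
proof (cases m)
  case (fields m11 m12 m22)
  show ?thesis
  proof (cases "m11 = 0")
    case True
    with fields show ?thesis by (intro that[of "(1, 0)"]) (auto simp: bform_def zero_prod_def)
  next
    case False
    define s where "s = sqrt (- fdet m)"
    have "s\<^sup>2 = m12\<^sup>2 - m11 * m22"
      using assms by (simp add: s_def fields fdet_def)
    moreover have "qform m (s - m12, m11) = m11 * (s\<^sup>2 - m12\<^sup>2 + m11 * m22)"
      by (simp add: fields bform_def power2_eq_square algebra_simps)
    ultimately have "qform m (s - m12, m11) = 0"
      by simp
    with False show ?thesis by (intro that[of "(s - m12, m11)"]) (auto simp: zero_prod_def)
  qed
qed

lemma singular_form_orthogonal:
  assumes "fdet m = 0" "qform m x = 0"
  shows "bform m x y = 0"
  using qform_mult_qform[of m x y] assms by simp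

lemma singular_form_nonneg:
  assumes "fdet m = 0" "0 < qform m y"
  shows "0 \<le> qform m x"
proof -
  have "0 \<le> qform m x * qform m y"
    using qform_mult_qform[of m x y] assms(1) by simp
  then show ?thesis using assms(2) by (simp add: zero_le_mult_iff)
qed

lemma semidefinite_form_pos:
  assumes "\<And>x. 0 \<le> qform m x" "0 < fdet m" "x \<noteq> 0"
  shows "0 < qform m x"
proof (rule ccontr)
  assume "\<not> 0 < qform m x"
  with assms(1)[of x] have "qform m x = 0" by linarith
  then have "(bform m x (- snd x, fst x))\<^sup>2 + fdet m * (cross2 x (- snd x, fst x))\<^sup>2 = 0"
    using qform_mult_qform[of m x "(- snd x, fst x)"] by simp
  moreover have "cross2 x (- snd x, fst x) \<noteq> 0"
    using \<open>x \<noteq> 0\<close> by (auto simp: cross2_def prod_eq_iff)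
  then have "0 < fdet m * (cross2 x (- snd x, fst x))\<^sup>2"
    using \<open>0 < fdet m\<close> by simp
  ultimately show False by (smt (verit) zero_le_power2)
qed

lemma quadratic_unique_nonneg_root:
  fixes a b c :: real
  assumes "a < 0" "0 < c"
  shows "\<exists>!t. 0 \<le> t \<and> a * t\<^sup>2 + b * t + c = 0"
proof -
  have "b\<^sup>2 < discrim a b c"
    using assms by (simp add: discrim_def mult_neg_pos)
  then have "\<bar>b\<bar> < sqrt (discrim a b c)" and "0 \<le> discrim a b c"
    using zero_le_power2[of b] real_sqrt_abs real_sqrt_less_mono by (metis, linarith)
  then have root: "0 \<le> t \<and> a * t\<^sup>2 + b * t + c = 0"
    if "t = (- b - sqrt (discrim a b c)) / (2 * a)" for t
    using assms discriminant_nonneg[of a b c t] that by (simp add: zero_le_divide_iff)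
  have "s = t" if s: "0 \<le> s \<and> a * s\<^sup>2 + b * s + c = 0" and t: "0 \<le> t \<and> a * t\<^sup>2 + b * t + c = 0"
    for s t
  proof (rule ccontr)
    assume "s \<noteq> t"
    have "(s - t) * (a * (s + t) + b) = (a * s\<^sup>2 + b * s) - (a * t\<^sup>2 + b * t)"
      by (simp add: power2_eq_square algebra_simps)
    with s t have "(s - t) * (a * (s + t) + b) = 0" by linarith
    with \<open>s \<noteq> t\<close> have sum: "a * (s + t) + b = 0" by simp
    have "a * s\<^sup>2 + b * s = s * (a * (s + t) + b) - a * s * t"
      by (simp add: power2_eq_square algebra_simps)
    with s sum have "c = a * s * t" by simp
    moreover have "a * s * t \<le> 0" using assms s t by (simp add: mult_nonpos_nonneg)
    ultimately show False using \<open>0 < c\<close> by simp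
  qed
  with root show ?thesis by blast
qed

locale definite_pencil =
  fixes q n :: "real \<times> real \<times> real"
  assumes q_nonneg: "\<And>x. 0 \<le> qform q x"
    and fdet_q_pos: "0 < fdet q"
    and fdet_n_neg: "fdet n < 0"
begin

text \<open>\<open>q - eig *\<^sub>R n\<close> is singular and positive semidefinite, so \<open>eig\<close> is the minimum of
  \<open>qform q / qform n\<close> on \<open>qform n > 0\<close>, attained on the isotropic line of \<open>q - eig *\<^sub>R n\<close>.\<close>

definition eig :: real where
  "eig = (THE t. 0 \<le> t \<and> fdet (q - t *\<^sub>R n) = 0)"

lemma eig_iff: "0 \<le> t \<and> fdet (q - t *\<^sub>R n) = 0 \<longleftrightarrow> t = eig"
proof -
  obtain b where b: "\<And>t. fdet (q - t *\<^sub>R n) = fdet n * t\<^sup>2 + b * t + fdet q"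
    using fdet_diff_scaleR_quadratic by blast
  have root: "\<exists>!t. 0 \<le> t \<and> fdet (q - t *\<^sub>R n) = 0"
    unfolding b by (rule quadratic_unique_nonneg_root[OF fdet_n_neg fdet_q_pos])
  show ?thesis
  proof
    assume "0 \<le> t \<and> fdet (q - t *\<^sub>R n) = 0"
    with root show "t = eig" unfolding eig_def by (simp add: the1_equality)
  next
    assume "t = eig"
    with theI'[OF root] show "0 \<le> t \<and> fdet (q - t *\<^sub>R n) = 0" unfolding eig_def by simp
  qed
qed

lemma fdet_eig: "fdet (q - eig *\<^sub>R n) = 0"
  using eig_iff by blast

lemma eig_pos: "0 < eig"
  using eig_iff[of eig] fdet_q_pos by (cases "eig = 0") auto

lemma q_pos: "x \<noteq> 0 \<Longrightarrow> 0 < qform q x"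
  using semidefinite_form_pos q_nonneg fdet_q_pos by blast

lemma eig_le: "eig * qform n x \<le> qform q x"
proof -
  obtain y where "y \<noteq> 0" "qform n y = 0"
    using fdet_nonpos_isotropic fdet_n_neg by (metis less_imp_le)
  then have "0 < qform (q - eig *\<^sub>R n) y"
    using q_pos by (simp add: bform_diff_scaleR)
  then have "0 \<le> qform (q - eig *\<^sub>R n) x"
    using singular_form_nonneg fdet_eig by blast
  then show ?thesis by (simp add: bform_diff_scaleR)
qed

lemma eig_attained:
  obtains k where "0 < qform n k" "qform q k = eig * qform n k"
proof -
  obtain k where "k \<noteq> 0" "qform (q - eig *\<^sub>R n) k = 0"
    using fdet_nonpos_isotropic fdet_eig by (metis order_refl)
  then have eq: "qform q k = eig * qform n k"
    by (simp add: bform_diff_scaleR)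
  with q_pos[OF \<open>k \<noteq> 0\<close>] eig_pos have "0 < qform n k"
    by (simp add: zero_less_mult_iff)
  with eq show ?thesis using that by blast
qed

lemma eig_attained_orthogonal:
  assumes "qform q x = eig * qform n x"
  shows "bform q x y = eig * bform n x y"
  using singular_form_orthogonal[OF fdet_eig, of x y] assms by (simp add: bform_diff_scaleR)

lemma eig_attained_collinear:
  assumes "qform q x = eig * qform n x" "qform q y = eig * qform n y"
  shows "cross2 x y = 0"
proof -
  have "eig\<^sup>2 * (qform n x * qform n y) = qform q x * qform q y"
    using assms by (simp add: power2_eq_square)
  then have "eig\<^sup>2 * ((bform n x y)\<^sup>2 + fdet n * (cross2 x y)\<^sup>2)
      = (eig * bform n x y)\<^sup>2 + fdet q * (cross2 x y)\<^sup>2"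
    using eig_attained_orthogonal[OF assms(1), of y] by (simp add: qform_mult_qform)
  then have "(fdet q - eig\<^sup>2 * fdet n) * (cross2 x y)\<^sup>2 = 0"
    by (simp add: power_mult_distrib algebra_simps, argo)
  moreover have "eig\<^sup>2 * fdet n < fdet q"
    using fdet_n_neg fdet_q_pos by (smt (verit) mult_nonneg_nonpos zero_le_power2)
  ultimately show ?thesis by simp
qed

lemma eig_attained_iff:
  assumes "0 < qform n x" "cross2 x y \<noteq> 0"
  shows "qform q x = eig * qform n x \<longleftrightarrow> qform q x * bform n x y = qform n x * bform q x y"
proof
  assume "qform q x = eig * qform n x"
  then show "qform q x * bform n x y = qform n x * bform q x y"
    using eig_attained_orthogonal by simp
next
  assume crit: "qform q x * bform n x y = qform n x * bform q x y"
  define t where "t = qform q x / qform n x"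
  have "qform (q - t *\<^sub>R n) x = 0" "bform (q - t *\<^sub>R n) x y = 0"
    using assms(1) crit by (simp_all add: t_def bform_diff_scaleR field_simps)
  then have "fdet (q - t *\<^sub>R n) = 0"
    using qform_mult_qform[of "q - t *\<^sub>R n" x y] assms(2) by simp
  moreover have "0 \<le> t"
    using q_nonneg assms(1) by (simp add: t_def)
  ultimately have "t = eig" using eig_iff by blast
  then show "qform q x = eig * qform n x"
    using assms(1) by (simp add: t_def field_simps)
qed

end

lemma herm_cnj: "herm y x = cnj (herm x y)"
  by (simp add: herm_def)

lemma herm_add_left: "herm (x + y) z = herm x z + herm y z"
  by (simp add: herm_def algebra_simps)

lemma herm_add_right: "herm z (x + y) = herm z x + herm z y"
  by (simp add: herm_def algebra_simps)

lemma herm_scale_left: "herm (c *s x) y = c * herm x y"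
  by (simp add: herm_def algebra_simps)

lemma herm_scale_right: "herm x (c *s y) = cnj c * herm x y"
  by (simp add: herm_def algebra_simps)

lemma herm_self_real: "herm x x = complex_of_real (Re (herm x x))"
  by (simp add: herm_def complex_eq_iff)

lemma Re_herm_self: "Re (herm x x) = (cmod (x$1))\<^sup>2 + (cmod (x$2))\<^sup>2 - (cmod (x$3))\<^sup>2"
  unfolding cmod_power2 by (simp add: herm_def power2_eq_square)

lemma cmod_add_mult_cnj_le:
  fixes a b d e :: complex
  shows "(cmod (a * cnj d + b * cnj e))\<^sup>2 \<le> ((cmod a)\<^sup>2 + (cmod b)\<^sup>2) * ((cmod d)\<^sup>2 + (cmod e)\<^sup>2)"
proof -
  have "((cmod a)\<^sup>2 + (cmod b)\<^sup>2) * ((cmod d)\<^sup>2 + (cmod e)\<^sup>2) - (cmod (a * cnj d + b * cnj e))\<^sup>2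
      = (cmod (a * e - b * d))\<^sup>2"
    unfolding cmod_power2 by (simp add: power2_eq_square algebra_simps)
  then show ?thesis
    by (metis diff_ge_0_iff_ge zero_le_power2)
qed

lemma orthogonal_negative_imp_positive:
  assumes "negative v" "herm x v = 0" "x \<noteq> 0"
  shows "0 < Re (herm x x)"
proof (rule ccontr)
  assume "\<not> 0 < Re (herm x x)"
  then have x: "(cmod (x$1))\<^sup>2 + (cmod (x$2))\<^sup>2 \<le> (cmod (x$3))\<^sup>2"
    by (simp add: Re_herm_self)
  have v: "(cmod (v$1))\<^sup>2 + (cmod (v$2))\<^sup>2 < (cmod (v$3))\<^sup>2"
    using assms(1) by (simp add: negative_def Re_herm_self)
  have "x$3 * cnj (v$3) = x$1 * cnj (v$1) + x$2 * cnj (v$2)"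
    using assms(2) by (simp add: herm_def algebra_simps)
  then have "(cmod (x$3))\<^sup>2 * (cmod (v$3))\<^sup>2
      \<le> ((cmod (x$1))\<^sup>2 + (cmod (x$2))\<^sup>2) * ((cmod (v$1))\<^sup>2 + (cmod (v$2))\<^sup>2)"
    using cmod_add_mult_cnj_le[of "x$1" "v$1" "x$2" "v$2"]
    by (metis complex_mod_cnj norm_mult power_mult_distrib)
  also have "\<dots> \<le> (cmod (x$3))\<^sup>2 * ((cmod (v$1))\<^sup>2 + (cmod (v$2))\<^sup>2)"
    using x by (simp add: mult_right_mono)
  finally have "(cmod (x$3))\<^sup>2 * (cmod (v$3))\<^sup>2 \<le> (cmod (x$3))\<^sup>2 * ((cmod (v$1))\<^sup>2 + (cmod (v$2))\<^sup>2)" .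
  with v have "x$3 = 0"
    by (smt (verit) mult_less_cancel_left_pos zero_less_power2 norm_eq_zero)
  with x have "x$1 = 0" "x$2 = 0"
    by (smt (verit) zero_le_power2 norm_eq_zero zero_less_power2)+
  with \<open>x$3 = 0\<close> \<open>x \<noteq> 0\<close> show False
    by (simp add: vec_eq_iff forall_3)
qed

locale geodesic_frame =
  fixes v w p :: "complex^3"
  assumes v_negative: "negative v"
    and herm_v_w_real: "herm v w \<in> \<real>"
    and w_independent: "\<not> (\<exists>c. w = c *s v)"
    and p_positive: "positive p"
begin

definition pt :: "real \<times> real \<Rightarrow> complex^3" where
  "pt x = complex_of_real (fst x) *s v + complex_of_real (snd x) *s w"

definition nform :: "real \<times> real \<times> real" where
  "nform = (- Re (herm v v), - Re (herm v w), - Re (herm w w))"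

definition pform :: "real \<times> real \<times> real" where
  "pform = ((cmod (herm v p))\<^sup>2, Re (herm v p * cnj (herm w p)), (cmod (herm w p))\<^sup>2)"

definition skew :: real where
  "skew = Im (herm v p * cnj (herm w p))"

lemma herm_pt_pt: "herm (pt x) (pt y) = - complex_of_real (bform nform x y)"
proof -
  have "herm v w = complex_of_real (Re (herm v w))"
    using herm_v_w_real by (simp add: complex_is_Real_iff complex_eq_iff)
  moreover have "herm w v = herm v w"
    using herm_cnj[of w v] herm_v_w_real by (simp add: Reals_cnj_iff)
  ultimately show ?thesis
    using herm_self_real[of v] herm_self_real[of w]
    by (simp add: pt_def nform_def bform_def herm_add_left herm_add_right herm_scale_left
        herm_scale_right complex_eq_iff algebra_simps)
qed

lemma herm_pt_p_mult_cnj: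
  "herm (pt x) p * cnj (herm (pt y) p) = Complex (bform pform x y) (cross2 x y * skew)"
  unfolding pform_def cmod_power2
  by (simp add: pt_def skew_def bform_def cross2_def herm_add_left herm_scale_left
      complex_eq_iff cmod_power2 power2_eq_square algebra_simps)

lemma qform_pform: "qform pform x = (cmod (herm (pt x) p))\<^sup>2"
  using herm_pt_p_mult_cnj[of x x] unfolding cmod_power2
  by (simp add: cross2_def complex_eq_iff power2_eq_square)

lemma fdet_pform: "fdet pform = skew\<^sup>2"
  unfolding fdet_def pform_def skew_def cmod_power2
  by (simp add: power2_eq_square algebra_simps)

lemma fdet_nform_neg: "fdet nform < 0"
proof -
  define V R W where "V = Re (herm v v)" and "R = Re (herm v w)" and "W = Re (herm w w)"
  have V: "V < 0" using v_negative by (simp add: V_def negative_def)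
  define x where "x = pt (- R / V, 1)"
  have "herm x v = - complex_of_real (bform nform (- R / V, 1) (1, 0))"
    using herm_pt_pt[of "(- R / V, 1)" "(1, 0)"] by (simp add: x_def pt_def)
  also have "bform nform (- R / V, 1) (1, 0) = 0"
    using V by (simp add: bform_def nform_def V_def R_def)
  finally have "herm x v = 0" by simp
  moreover have "x \<noteq> 0"
  proof
    assume "x = 0"
    then have "w = complex_of_real (R / V) *s v"
      by (simp add: x_def pt_def vec_eq_iff algebra_simps)
    with w_independent show False by blast
  qed
  ultimately have "0 < Re (herm x x)"
    using orthogonal_negative_imp_positive v_negative by blast
  then have "qform nform (- R / V, 1) < 0"
    using herm_pt_pt[of "(- R / V, 1)" "(- R / V, 1)"] by (simp add: x_def)
  then have "0 < V * qform nform (- R / V, 1)"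
    using V by (simp add: mult_neg_neg)
  moreover have "V * qform nform (- R / V, 1) = - fdet nform"
    using V by (simp add: bform_def nform_def fdet_def V_def R_def W_def power2_eq_square field_simps)
  ultimately show ?thesis
    by linarith
qed

lemma pt_scaleR: "pt (s *\<^sub>R x) = complex_of_real s *s pt x"
  by (simp add: pt_def vec_eq_iff algebra_simps)

lemma herm_p_pt: "herm p (pt y) = cnj (herm (pt y) p)"
  by (rule herm_cnj)

lemma herm_scaled_pt_self:
  "herm (c *s pt y) (c *s pt y) = - complex_of_real ((cmod c)\<^sup>2 * qform nform y)"
proof -
  have "herm (c *s pt y) (c *s pt y) = (c * cnj c) * herm (pt y) (pt y)"
    by (simp add: herm_scale_left herm_scale_right)
  then show ?thesis
    by (simp add: herm_pt_pt complex_norm_square[symmetric])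
qed

lemma negative_scaled_pt_iff:
  assumes "c \<noteq> 0"
  shows "negative (c *s pt y) \<longleftrightarrow> 0 < qform nform y"
proof -
  have "Re (herm (c *s pt y) (c *s pt y)) < 0 \<longleftrightarrow> 0 < qform nform y"
    using assms by (simp add: herm_scaled_pt_self zero_less_mult_iff)
  moreover have "Re (herm (c *s pt y) (c *s pt y)) < 0 \<Longrightarrow> c *s pt y \<noteq> 0"
    by (auto simp: herm_def)
  ultimately show ?thesis
    unfolding negative_def by blast
qed

lemma negative_point_iff:
  "x \<in> geodesic_through v w \<and> negative x \<longleftrightarrow>
    (\<exists>c y. c \<noteq> 0 \<and> x = c *s pt y \<and> 0 < qform nform y)"
proof
  assume "x \<in> geodesic_through v w \<and> negative x"
  then obtain a b c where "c \<noteq> 0" "x = c *s pt (a, b)" "negative x"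
    by (auto simp: geodesic_through_def pt_def)
  then show "\<exists>c y. c \<noteq> 0 \<and> x = c *s pt y \<and> 0 < qform nform y"
    using negative_scaled_pt_iff by blast
next
  assume "\<exists>c y. c \<noteq> 0 \<and> x = c *s pt y \<and> 0 < qform nform y"
  then obtain c y where "c \<noteq> 0" "x = c *s pt y" "0 < qform nform y"
    by blast
  moreover from this have "negative x"
    using negative_scaled_pt_iff by blast
  ultimately show "x \<in> geodesic_through v w \<and> negative x"
    by (auto simp: geodesic_through_def pt_def in_cball_def negative_def)
qed

lemma pt_negative_point:
  assumes "0 < qform nform y"
  shows "pt y \<in> geodesic_through v w" "negative (pt y)"
proof -
  have "\<exists>c z. c \<noteq> 0 \<and> pt y = c *s pt z \<and> 0 < qform nform z"
    using assms by (intro exI[of _ 1] exI[of _ y]) simp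
  then show "pt y \<in> geodesic_through v w" "negative (pt y)"
    using negative_point_iff by blast+
qed

lemma ta_pt_cgeod_scaled_pt:
  assumes "c \<noteq> 0"
  shows "ta_pt_cgeod (c *s pt y) p = 1 + qform pform y / (qform nform y * Re (herm p p))"
proof -
  obtain r where r: "herm p p = complex_of_real r"
    using herm_self_real[of p] by blast
  have "herm (c *s pt y) p * herm p (c *s pt y) = (c * cnj c) * (herm (pt y) p * cnj (herm (pt y) p))"
    by (simp add: herm_scale_left herm_scale_right herm_p_pt mult_ac)
  also have "\<dots> = complex_of_real ((cmod c)\<^sup>2 * qform pform y)"
    by (simp add: qform_pform complex_norm_square[symmetric])
  finally have "ta (c *s pt y) p = complex_of_real (- (qform pform y / (qform nform y * r)))"
    using assms by (simp add: ta_def r herm_scaled_pt_self)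
  then show ?thesis
    by (simp add: ta_pt_cgeod_def r)
qed

lemma ratio_scaled_pt:
  assumes "c \<noteq> 0" "c' \<noteq> 0"
  shows "herm (c *s pt x) p * herm p (c' *s pt y) / herm (c *s pt x) (c' *s pt y)
    = - Complex (bform pform x y) (cross2 x y * skew) / complex_of_real (bform nform x y)"
  using assms
  by (simp add: herm_scale_left herm_scale_right herm_p_pt herm_pt_pt herm_pt_p_mult_cnj[symmetric]
      field_simps)

lemma Re_ratio_scaled_pt:
  assumes "c \<noteq> 0" "c' \<noteq> 0"
  shows "Re (herm p (c' *s pt y) * herm (c *s pt x) (c *s pt x) / (herm (c *s pt x) (c' *s pt y) * herm p (c *s pt x)))
    = qform nform x * bform pform x y / (bform nform x y * qform pform x)"
proof (cases "herm (pt x) p = 0")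
  case True
  then show ?thesis
    by (simp add: herm_scale_left herm_scale_right herm_p_pt qform_pform)
next
  case False
  have "herm p (c' *s pt y) * herm (c *s pt x) (c *s pt x) / (herm (c *s pt x) (c' *s pt y) * herm p (c *s pt x))
      = complex_of_real (qform nform x) * (herm (pt x) p * cnj (herm (pt y) p))
        / (complex_of_real (bform nform x y) * (herm (pt x) p * cnj (herm (pt x) p)))"
    using assms False
    by (simp add: herm_scale_left herm_scale_right herm_p_pt herm_pt_pt field_simps)
  also have "\<dots> = complex_of_real (qform nform x / (bform nform x y * qform pform x))
      * Complex (bform pform x y) (cross2 x y * skew)"
    by (simp add: herm_pt_p_mult_cnj cross2_def Complex_eq)
  finally show ?thesis
    by simp
qed

lemma skew_eq_0_if_meets:
  assumes "x \<in> geodesic_through v w" "negative x" "herm x p = 0"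
  shows "skew = 0"
proof (rule ccontr)
  assume "skew \<noteq> 0"
  obtain c y where "c \<noteq> 0" "x = c *s pt y" "0 < qform nform y"
    using assms negative_point_iff by blast
  then have "y \<noteq> 0" "qform pform y = 0"
    using assms(3) by (auto simp: qform_pform herm_scale_left)
  moreover have "0 < fdet pform"
    using \<open>skew \<noteq> 0\<close> by (simp add: fdet_pform)
  ultimately show False
    using semidefinite_form_pos[of pform y] qform_pform by simp
qed

lemma ratio_real_if_skew_eq_0:
  assumes "g \<in> geodesic_through v w" "negative g" "g' \<in> geodesic_through v w" "negative g'"
    and "skew = 0"
  shows "herm g p * herm p g' / herm g g' \<in> \<real>"
proof -
  obtain c x c' y where "c \<noteq> 0" "g = c *s pt x" "c' \<noteq> 0" "g' = c' *s pt y"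
    using assms(1-4) negative_point_iff by metis
  then show ?thesis
    using assms(5) by (simp add: ratio_scaled_pt complex_is_Real_iff)
qed

end

locale nonreal_geodesic_frame = geodesic_frame +
  assumes skew_nonzero: "skew \<noteq> 0"

sublocale nonreal_geodesic_frame \<subseteq> definite_pencil pform nform
  by unfold_locales (use qform_pform fdet_pform skew_nonzero fdet_nform_neg in auto)

context nonreal_geodesic_frame
begin

lemma ta_pt_cgeod_scaled_pt_ge:
  assumes "c \<noteq> 0" "0 < qform nform y"
  shows "1 + eig / Re (herm p p) \<le> ta_pt_cgeod (c *s pt y) p"
proof -
  have "eig \<le> qform pform y / qform nform y"
    using eig_le[of y] assms(2) by (simp add: field_simps)
  then have "eig / Re (herm p p) \<le> qform pform y / qform nform y / Re (herm p p)"
    using p_positive by (intro divide_right_mono) (auto simp: positive_def)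
  then show ?thesis
    using assms by (simp add: ta_pt_cgeod_scaled_pt)
qed

lemma ta_pt_cgeod_scaled_pt_eq_iff:
  assumes "c \<noteq> 0" "0 < qform nform y"
  shows "ta_pt_cgeod (c *s pt y) p = 1 + eig / Re (herm p p) \<longleftrightarrow> qform pform y = eig * qform nform y"
  using p_positive assms by (auto simp: ta_pt_cgeod_scaled_pt positive_def field_simps)

lemma ta_geod_cgeod_eq: "ta_geod_cgeod (geodesic_through v w) p = 1 + eig / Re (herm p p)"
proof -
  obtain k where k: "0 < qform nform k" "qform pform k = eig * qform nform k"
    using eig_attained by blast
  let ?A = "{g \<in> geodesic_through v w. negative g}"
  have "pt k \<in> ?A"
    using pt_negative_point[OF k(1)] by blast
  moreover have "ta_pt_cgeod (pt k) p = 1 + eig / Re (herm p p)"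
    using ta_pt_cgeod_scaled_pt_eq_iff[of 1 k] k by simp
  moreover have "1 + eig / Re (herm p p) \<le> ta_pt_cgeod g p" if "g \<in> ?A" for g
    using that negative_point_iff[of g] ta_pt_cgeod_scaled_pt_ge by auto
  ultimately show ?thesis
    unfolding ta_geod_cgeod_def by (metis (no_types, lifting) cINF_lower bdd_belowI2 cINF_greatest
        empty_iff antisym)
qed

lemma closest_point_unique:
  "\<exists>x\<in>geodesic_through v w. negative x \<and> ta_pt_cgeod x p = ta_geod_cgeod (geodesic_through v w) p \<and>
     (\<forall>y\<in>geodesic_through v w. negative y \<and> ta_pt_cgeod y p = ta_geod_cgeod (geodesic_through v w) p
        \<longrightarrow> same_point x y)"
proof -
  obtain k where k: "0 < qform nform k" "qform pform k = eig * qform nform k"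
    using eig_attained by blast
  show ?thesis
  proof (intro bexI[of _ "pt k"] conjI ballI impI)
    show "ta_pt_cgeod (pt k) p = ta_geod_cgeod (geodesic_through v w) p"
      using ta_pt_cgeod_scaled_pt_eq_iff[of 1 k] k by (simp add: ta_geod_cgeod_eq)
  next
    fix y
    assume "y \<in> geodesic_through v w"
      and y: "negative y \<and> ta_pt_cgeod y p = ta_geod_cgeod (geodesic_through v w) p"
    then obtain c z where z: "c \<noteq> 0" "y = c *s pt z" "0 < qform nform z"
      using negative_point_iff by blast
    then have "qform pform z = eig * qform nform z"
      using y ta_pt_cgeod_scaled_pt_eq_iff[OF z(1,3)] by (simp add: ta_geod_cgeod_eq)
    then have "cross2 k z = 0"
      using eig_attained_collinear k(2) by blast
    moreover have "k \<noteq> 0" "z \<noteq> 0"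
      using k(1) z(3) by auto
    ultimately obtain s where s: "z = s *\<^sub>R k"
      using cross2_eq_0_imp_scaleR by blast
    with \<open>z \<noteq> 0\<close> have "c * complex_of_real s \<noteq> 0"
      using z(1) by auto
    moreover have "y = (c * complex_of_real s) *s pt k"
      unfolding z(2) s pt_scaleR by (rule vector_smult_assoc)
    ultimately show "same_point (pt k) y"
      unfolding same_point_def by blast
  qed (use pt_negative_point[OF k(1)] in blast)+
qed

lemma closest_point_iff:
  assumes "g \<in> geodesic_through v w" "negative g" "g' \<in> geodesic_through v w" "negative g'"
    and "herm g p * herm p g' / herm g g' \<notin> \<real>"
  shows "ta_geod_cgeod (geodesic_through v w) p = ta_pt_cgeod g p \<longleftrightarrow>
    Re (herm p g' * herm g g / (herm g g' * herm p g)) = 1"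
proof -
  obtain c x c' y where g: "c \<noteq> 0" "g = c *s pt x" "0 < qform nform x"
    and g': "c' \<noteq> 0" "g' = c' *s pt y"
    using assms(1-4) negative_point_iff by metis
  then have "cross2 x y \<noteq> 0" "bform nform x y \<noteq> 0"
    using assms(5) skew_nonzero by (auto simp: ratio_scaled_pt complex_is_Real_iff)
  moreover have "0 < qform pform x"
    using g(3) q_pos[of x] by (cases "x = 0") auto
  ultimately have "qform pform x = eig * qform nform x \<longleftrightarrow>
      qform nform x * bform pform x y / (bform nform x y * qform pform x) = 1"
    using eig_attained_iff[OF g(3)] by (auto simp: field_simps)
  then show ?thesis
    using g g' ta_pt_cgeod_scaled_pt_eq_iff[OF g(1,3)] Re_ratio_scaled_pt[OF g(1) g'(1)]
    by (auto simp: ta_geod_cgeod_eq)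
qed

end

theorem lemma4p1:
  fixes p g g' :: "complex^3" and G :: "(complex^3) set"
  assumes p: "positive p"
    and G: "is_geodesic G"
    and notin: "\<not> G \<subseteq> complex_geodesic p"
    and g: "g \<in> G" "negative g"
    and g': "g' \<in> G" "negative g'"
    and dist: "\<not> same_point g g'"
  shows "((\<exists>x\<in>G \<inter> complex_geodesic p. negative x) \<longrightarrow>
            herm g p * herm p g' / herm g g' \<in> \<real>)
     \<and> (herm g p * herm p g' / herm g g' \<notin> \<real> \<longrightarrow>
          ((\<exists>x\<in>G. negative x \<and> ta_pt_cgeod x p = ta_geod_cgeod G p \<and>
              (\<forall>y\<in>G. negative y \<and> ta_pt_cgeod y p = ta_geod_cgeod G p \<longrightarrow> same_point x y))
           \<and> (ta_geod_cgeod G p = ta_pt_cgeod g p \<longleftrightarrow>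
              Re (herm p g' * herm g g / (herm g g' * herm p g)) = 1)))"
proof -
  obtain v w where frame: "geodesic_frame v w p" and G_eq: "G = geodesic_through v w"
    using G p unfolding is_geodesic_def geodesic_frame_def by blast
  interpret geodesic_frame v w p
    by (fact frame)
  have "herm g p * herm p g' / herm g g' \<in> \<real>" if "\<exists>x\<in>G \<inter> complex_geodesic p. negative x"
    using that g g' skew_eq_0_if_meets ratio_real_if_skew_eq_0
    unfolding G_eq complex_geodesic_def by blast
  moreover have "(\<exists>x\<in>G. negative x \<and> ta_pt_cgeod x p = ta_geod_cgeod G p \<and>
              (\<forall>y\<in>G. negative y \<and> ta_pt_cgeod y p = ta_geod_cgeod G p \<longrightarrow> same_point x y))
           \<and> (ta_geod_cgeod G p = ta_pt_cgeod g p \<longleftrightarrow>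
              Re (herm p g' * herm g g / (herm g g' * herm p g)) = 1)"
    if nonreal: "herm g p * herm p g' / herm g g' \<notin> \<real>"
  proof -
    have "skew \<noteq> 0"
      using nonreal g g' ratio_real_if_skew_eq_0 unfolding G_eq by blast
    then interpret nonreal_geodesic_frame v w p
      by unfold_locales
    show ?thesis
      using closest_point_unique closest_point_iff[OF _ _ _ _ nonreal] g g' unfolding G_eq by blast
  qed
  ultimately show ?thesis
    by blast
qed

end
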